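(* For every closed guarded expression $\phi\in\mathcal{E}_0$, every $T$-coalgebra $C=(X,\xi)$ and every state $x\in X$: $x\in[\![\phi]\!]_C$ if and only if $x$ is behaviourally equivalent to $\phi$ regarded as a state of the coalgebra $(\mathcal{E}_0,\varepsilon)$. In particular, $\phi\in[\![\phi]\!]_{(\mathcal{E}_0,\varepsilon)}$ for all $\phi\in\mathcal{E}_0$.
   Context: Standing assumptions: $T:\mathbf{Set}\to\mathbf{Set}$ is a functor; $\mathcal{L}$ is a set of modalities with arities ($L/n$), each $L/n$ assigned an $n$-ary monotone singleton-preserving predicate lifting $[\![L]\!]$ for $T$ such that $\Lambda=\{[\![L]\!]\mid L\in\mathcal{L}\}$ is strongly expressive. (An $n$-ary predicate lifting is a family $\lambda_X:(\mathcal{P}X)^n\to\mathcal{P}(TX)$ with $\lambda_X(f^{-1}[A_1],\dots,f^{-1}[A_n])=(Tf)^{-1}[\lambda_Y(A_1,\dots,A_n)]$ for $f:X\to Y$; monotone if monotone in each argument; singleton-preserving if $|\lambda_X(\{x_1\},\dots,\{x_n\})|=1$ for all $x_i\in X$; $\Lambda$ strongly expressive if for every set $X$ and $t\in TX$ there are $\lambda/n\in\Lambda$, $x_i\in X$ with $\{t\}=\lambda_X(\{x_1\},\dots,\{x_n\})$.) Fix a set $V$ of variables. Expressions: $\phi::=z\mid\nu z.\,\phi\mid L(\phi_1,\dots,\phi_n)$. Closed: every variable occurrence bound by a $\nu$; guarded: every variable occurrence separated from its binding $\nu$ by at least one modality; $\mathcal{E}_0$ = closed guarded expressions. Semantics in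 $C=(X,\xi)$ under valuation $\kappa:V\to\mathcal{P}X$: $[\![z]\!]^\kappa=\kappa(z)$; $[\![L(\phi_1,\dots,\phi_n)]\!]^\kappa=\xi^{-1}[[\![L]\!]_X([\![\phi_1]\!]^\kappa,\dots,[\![\phi_n]\!]^\kappa)]$; $[\![\nu z.\phi]\!]^\kappa=$ greatest fixed point of $Y\mapsto[\![\phi]\!]^{\kappa[z\mapsto Y]}$; for closed $\phi$ write $[\![\phi]\!]_C$. The coalgebra $\varepsilon:\mathcal{E}_0\to T\mathcal{E}_0$ is defined by $\varepsilon(L(\phi_1,\dots,\phi_n))=$ the unique element of $[\![L]\!]_{\mathcal{E}_0}(\{\phi_1\},\dots,\{\phi_n\})$ and $\varepsilon(\nu x.\phi)=\varepsilon(\phi[\nu x.\phi/x])$ (well-defined by induction on the number of $\nu$'s not in the scope of a modality). States are behaviourally equivalent if coalgebra morphisms (maps $h$ with $Th\circ\xi=\zeta\circ h$) into a common coalgebra identify them. *)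

theory Defs
  imports Main
begin

text \<open>A functor T on Set is represented by its action on the subsets of a
universe type 'u: TO X is the set T X (as a subset of a type 't of
T-values) and TM f is T f, where f : X -> Y is any HOL function mapping X
into Y (only its values on X matter).\<close>

definition set_functor :: "('u set \<Rightarrow> 't set) \<Rightarrow> (('u \<Rightarrow> 'u) \<Rightarrow> 't \<Rightarrow> 't) \<Rightarrow> bool" where
  "set_functor TO TM \<longleftrightarrow>
     (\<forall>X Y f. (\<forall>x\<in>X. f x \<in> Y) \<longrightarrow> (\<forall>t\<in>TO X. TM f t \<in> TO Y)) \<and>
     (\<forall>X. \<forall>t\<in>TO X. TM id t = t) \<and>
     (\<forall>X Y Z f g. (\<forall>x\<in>X. f x \<in> Y) \<longrightarrow> (\<forall>y\<in>Y. g y \<in> Z) \<longrightarrow>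
          (\<forall>t\<in>TO X. TM (g \<circ> f) t = TM g (TM f t))) \<and>
     (\<forall>X f g. (\<forall>x\<in>X. f x = g x) \<longrightarrow> (\<forall>t\<in>TO X. TM f t = TM g t))"

text \<open>lift L X [A1,...,An] is the n-ary predicate lifting [[L]]_X(A1,...,An),
where n = ar L; it is only meaningful for lists of length ar L of subsets of X.\<close>

definition pred_liftings ::
  "('u set \<Rightarrow> 't set) \<Rightarrow> (('u \<Rightarrow> 'u) \<Rightarrow> 't \<Rightarrow> 't) \<Rightarrow> ('l \<Rightarrow> nat)
     \<Rightarrow> ('l \<Rightarrow> 'u set \<Rightarrow> 'u set list \<Rightarrow> 't set) \<Rightarrow> bool" where
  "pred_liftings TO TM ar lift \<longleftrightarrow>
     (\<forall>L X As. length As = ar L \<and> (\<forall>A\<in>set As. A \<subseteq> X) \<longrightarrow> lift L X As \<subseteq> TO X) \<and>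
     (\<forall>L X Y f Bs. (\<forall>x\<in>X. f x \<in> Y) \<and> length Bs = ar L \<and> (\<forall>B\<in>set Bs. B \<subseteq> Y) \<longrightarrow>
        lift L X (map (\<lambda>B. {x\<in>X. f x \<in> B}) Bs) = {t\<in>TO X. TM f t \<in> lift L Y Bs})"

definition monotone_liftings ::
  "('l \<Rightarrow> nat) \<Rightarrow> ('l \<Rightarrow> 'u set \<Rightarrow> 'u set list \<Rightarrow> 't set) \<Rightarrow> bool" where
  "monotone_liftings ar lift \<longleftrightarrow>
     (\<forall>L X As Bs. length As = ar L \<and> length Bs = ar L \<and>
        (\<forall>i<ar L. As ! i \<subseteq> Bs ! i \<and> Bs ! i \<subseteq> X) \<longrightarrow> lift L X As \<subseteq> lift L X Bs)"

definition singleton_preserving ::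
  "('l \<Rightarrow> nat) \<Rightarrow> ('l \<Rightarrow> 'u set \<Rightarrow> 'u set list \<Rightarrow> 't set) \<Rightarrow> bool" where
  "singleton_preserving ar lift \<longleftrightarrow>
     (\<forall>L X xs. length xs = ar L \<and> set xs \<subseteq> X \<longrightarrow>
        card (lift L X (map (\<lambda>x. {x}) xs)) = 1)"

definition strongly_expressive ::
  "('u set \<Rightarrow> 't set) \<Rightarrow> ('l \<Rightarrow> nat) \<Rightarrow> ('l \<Rightarrow> 'u set \<Rightarrow> 'u set list \<Rightarrow> 't set) \<Rightarrow> bool" where
  "strongly_expressive TO ar lift \<longleftrightarrow>
     (\<forall>X. \<forall>t\<in>TO X. \<exists>L xs. length xs = ar L \<and> set xs \<subseteq> X \<and>
        lift L X (map (\<lambda>x. {x}) xs) = {t})"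

definition is_coalg :: "('u set \<Rightarrow> 't set) \<Rightarrow> 'u set \<Rightarrow> ('u \<Rightarrow> 't) \<Rightarrow> bool" where
  "is_coalg TO X \<xi> \<longleftrightarrow> (\<forall>x\<in>X. \<xi> x \<in> TO X)"

definition coalg_hom ::
  "(('u \<Rightarrow> 'u) \<Rightarrow> 't \<Rightarrow> 't) \<Rightarrow> 'u set \<Rightarrow> ('u \<Rightarrow> 't) \<Rightarrow> 'u set \<Rightarrow> ('u \<Rightarrow> 't) \<Rightarrow> ('u \<Rightarrow> 'u) \<Rightarrow> bool" where
  "coalg_hom TM X \<xi> Y \<zeta> h \<longleftrightarrow> (\<forall>x\<in>X. h x \<in> Y) \<and> (\<forall>x\<in>X. TM h (\<xi> x) = \<zeta> (h x))"

definition beh_equiv ::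
  "('u set \<Rightarrow> 't set) \<Rightarrow> (('u \<Rightarrow> 'u) \<Rightarrow> 't \<Rightarrow> 't)
     \<Rightarrow> 'u set \<Rightarrow> ('u \<Rightarrow> 't) \<Rightarrow> 'u \<Rightarrow> 'u set \<Rightarrow> ('u \<Rightarrow> 't) \<Rightarrow> 'u \<Rightarrow> bool" where
  "beh_equiv TO TM X \<xi> x Y \<zeta> y \<longleftrightarrow>
     (\<exists>Z \<theta> h g. is_coalg TO Z \<theta> \<and> coalg_hom TM X \<xi> Z \<theta> h \<and> coalg_hom TM Y \<zeta> Z \<theta> g \<and> h x = g y)"

datatype ('l, 'v) expr = Var 'v | Nu 'v "('l, 'v) expr" | Mod 'l "('l, 'v) expr list"

fun fv :: "('l, 'v) expr \<Rightarrow> 'v set" where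
  "fv (Var z) = {z}"
| "fv (Nu z e) = fv e - {z}"
| "fv (Mod L es) = (\<Union>e\<in>set es. fv e)"

text \<open>guarded_in S e: no occurrence in e of a variable in S (variables bound
by a nu not yet separated by a modality) is free in e before a modality.\<close>
fun guarded_in :: "'v set \<Rightarrow> ('l, 'v) expr \<Rightarrow> bool" where
  "guarded_in S (Var z) = (z \<notin> S)"
| "guarded_in S (Nu z e) = guarded_in (insert z S) e"
| "guarded_in S (Mod L es) = (\<forall>e\<in>set es. guarded_in {} e)"

fun wf_expr :: "('l \<Rightarrow> nat) \<Rightarrow> ('l, 'v) expr \<Rightarrow> bool" where
  "wf_expr ar (Var z) = True"
| "wf_expr ar (Nu z e) = wf_expr ar e"
| "wf_expr ar (Mod L es) = (length es = ar L \<and> (\<forall>e\<in>set es. wf_expr ar e))"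

definition E0 :: "('l \<Rightarrow> nat) \<Rightarrow> ('l, 'v) expr set" where
  "E0 ar = {e. wf_expr ar e \<and> fv e = {} \<and> guarded_in {} e}"

text \<open>Substitution (only used with closed s, so no capture can occur).\<close>
fun subst :: "'v \<Rightarrow> ('l, 'v) expr \<Rightarrow> ('l, 'v) expr \<Rightarrow> ('l, 'v) expr" where
  "subst x s (Var z) = (if z = x then s else Var z)"
| "subst x s (Nu z e) = (if z = x then Nu z e else Nu z (subst x s e))"
| "subst x s (Mod L es) = Mod L (map (subst x s) es)"

text \<open>The nu case is the greatest fixed point on the lattice of subsets of X,
written via Knaster-Tarski as the union of all post-fixed points.\<close>
fun sem :: "('l \<Rightarrow> 'u set \<Rightarrow> 'u set list \<Rightarrow> 't set) \<Rightarrow> 'u set \<Rightarrow> ('u \<Rightarrow> 't)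
              \<Rightarrow> ('v \<Rightarrow> 'u set) \<Rightarrow> ('l, 'v) expr \<Rightarrow> 'u set" where
  "sem lift X \<xi> \<kappa> (Var z) = \<kappa> z"
| "sem lift X \<xi> \<kappa> (Nu z e) = \<Union>{Y. Y \<subseteq> X \<and> Y \<subseteq> sem lift X \<xi> (\<kappa>(z := Y)) e}"
| "sem lift X \<xi> \<kappa> (Mod L es) = {x\<in>X. \<xi> x \<in> lift L X (map (sem lift X \<xi> \<kappa>) es)}"

definition semC :: "('l \<Rightarrow> 'u set \<Rightarrow> 'u set list \<Rightarrow> 't set) \<Rightarrow> 'u set \<Rightarrow> ('u \<Rightarrow> 't)
              \<Rightarrow> ('l, 'v) expr \<Rightarrow> 'u set" where
  "semC lift X \<xi> \<phi> = sem lift X \<xi> (\<lambda>_. {}) \<phi>"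

text \<open>The universe of states is (expr + 'x); the expression coalgebra has
carrier Inl ` E0.\<close>

inductive eps_rel :: "('l \<Rightarrow> nat) \<Rightarrow> ('l \<Rightarrow> (('l, 'v) expr + 'x) set \<Rightarrow> (('l, 'v) expr + 'x) set list \<Rightarrow> 't set)
                        \<Rightarrow> ('l, 'v) expr \<Rightarrow> 't \<Rightarrow> bool"
  for ar lift where
  eps_mod: "lift L (Inl ` E0 ar) (map (\<lambda>\<phi>. {Inl \<phi>}) \<phi>s) = {t} \<Longrightarrow> eps_rel ar lift (Mod L \<phi>s) t"
| eps_nu: "eps_rel ar lift (subst x (Nu x \<phi>) \<phi>) t \<Longrightarrow> eps_rel ar lift (Nu x \<phi>) t"

definition eps_coalg :: "('l \<Rightarrow> nat) \<Rightarrow> ('l \<Rightarrow> (('l, 'v) expr + 'x) set \<Rightarrow> (('l, 'v) expr + 'x) set list \<Rightarrow> 't set)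
                           \<Rightarrow> ('l, 'v) expr + 'x \<Rightarrow> 't" where
  "eps_coalg ar lift u = (case u of Inl \<phi> \<Rightarrow> (THE t. eps_rel ar lift \<phi> t) | Inr _ \<Rightarrow> undefined)"

end

theory Submission
  imports Defs
begin

text \<open>Semantics is reflected along coalgebra morphisms, so the backward direction reduces
  to the truth lemma: every closed guarded expression satisfies itself in the expression
  coalgebra. That is proved by induction on the expression; a fixed point is witnessed by the
  post-fixed point of all expressions with the same transition as its unfolding, which works
  because the semantics never distinguishes states with equal transitions. For the forward
  direction, glue every state to each expression it satisfies in the disjoint union of the
  coalgebra and the expression coalgebra: monotonicity and singleton preservation of the
  liftings force glued states to have glued transitions, so the quotient carries a coalgebra
  structure for which both injections are morphisms.\<close>

fun ssubst :: "('v \<Rightarrow> ('l,'v) expr) \<Rightarrow> ('l,'v) expr \<Rightarrow> ('l,'v) expr" where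
  "ssubst \<sigma> (Var z) = \<sigma> z"
| "ssubst \<sigma> (Nu z e) = Nu z (ssubst (\<sigma>(z := Var z)) e)"
| "ssubst \<sigma> (Mod L es) = Mod L (map (ssubst \<sigma>) es)"

fun leading_nus :: "('l,'v) expr \<Rightarrow> nat" where
  "leading_nus (Nu z e) = Suc (leading_nus e)"
| "leading_nus (Var z) = 0"
| "leading_nus (Mod L es) = 0"

lemma subst_fresh: "x \<notin> fv e \<Longrightarrow> subst x s e = e"
  by (induction e) (auto intro: map_idI)

lemma fv_subst: "fv s = {} \<Longrightarrow> fv (subst x s e) = fv e - {x}"
  by (induction e) auto

lemma wf_expr_subst: "wf_expr ar s \<Longrightarrow> wf_expr ar e \<Longrightarrow> wf_expr ar (subst x s e)"
  by (induction e) auto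

lemma guarded_in_Un_fresh: "guarded_in S e \<Longrightarrow> T \<inter> fv e = {} \<Longrightarrow> guarded_in (S \<union> T) e"
proof (induction e arbitrary: S T)
  case (Nu z e)
  have "guarded_in (insert z S \<union> (T - {z})) e"
    using Nu by (intro Nu.IH) auto
  moreover have "insert z S \<union> (T - {z}) = insert z (S \<union> T)" by auto
  ultimately show ?case by simp
qed auto

lemma guarded_in_subst:
  "guarded_in S e \<Longrightarrow> fv s = {} \<Longrightarrow> guarded_in {} s \<Longrightarrow> guarded_in (S - {x}) (subst x s e)"
proof (induction e arbitrary: S)
  case (Var z)
  then show ?case using guarded_in_Un_fresh[of "{}" s "S - {x}"] by auto
next
  case (Nu z e)
  show ?case
  proof (cases "z = x")
    case True
    then show ?thesis using Nu.prems by (simp add: insert_absorb)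
  next
    case False
    then have "insert z S - {x} = insert z (S - {x})" by auto
    then show ?thesis using False Nu.IH[of "insert z S"] Nu.prems by simp
  qed
qed fastforce+

lemma leading_nus_subst: "guarded_in S e \<Longrightarrow> x \<in> S \<Longrightarrow> leading_nus (subst x s e) = leading_nus e"
  by (induction e arbitrary: S) auto

lemma Nu_unfold_in_E0: "Nu x \<phi> \<in> E0 ar \<Longrightarrow> subst x (Nu x \<phi>) \<phi> \<in> E0 ar"
  using guarded_in_subst[of "{x}" \<phi> "Nu x \<phi>" x] fv_subst[of "Nu x \<phi>" x \<phi>]
    wf_expr_subst[of ar "Nu x \<phi>" \<phi> x]
  by (auto simp: E0_def)

lemma leading_nus_Nu_unfold:
  "Nu x \<phi> \<in> E0 ar \<Longrightarrow> leading_nus (subst x (Nu x \<phi>) \<phi>) < leading_nus (Nu x \<phi>)"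
  using leading_nus_subst[of "{x}" \<phi> x] by (auto simp: E0_def)

lemma Mod_in_E0D: "Mod L \<phi>s \<in> E0 ar \<Longrightarrow> length \<phi>s = ar L \<and> (\<forall>\<phi>\<in>set \<phi>s. \<phi> \<in> E0 ar)"
  by (auto simp: E0_def)

lemma subst_ssubst_upd:
  "\<forall>y\<in>fv e. y \<noteq> z \<longrightarrow> z \<notin> fv (\<sigma> y) \<Longrightarrow>
   subst z N (ssubst (\<sigma>(z := Var z)) e) = ssubst (\<sigma>(z := N)) e"
proof (induction e arbitrary: \<sigma>)
  case (Var y)
  then show ?case by (auto intro: subst_fresh)
next
  case (Nu y e)
  show ?case
  proof (cases "y = z")
    case False
    have "subst z N (ssubst (\<sigma>(y := Var y, z := Var z)) e) = ssubst (\<sigma>(y := Var y, z := N)) e"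
      using Nu.prems by (intro Nu.IH) auto
    then show ?thesis using False by (simp add: fun_upd_twist del: fun_upd_apply)
  qed (simp del: fun_upd_apply)
qed auto

lemma ssubst_Var: "ssubst Var e = e"
  by (induction e) (auto intro: map_idI)

lemma set_functor_mapsto:
  "set_functor TO TM \<Longrightarrow> \<forall>x\<in>X. f x \<in> Y \<Longrightarrow> t \<in> TO X \<Longrightarrow> TM f t \<in> TO Y"
  unfolding set_functor_def by (elim conjE allE[of _ X] allE[of _ Y] allE[of _ f]) blast

lemma lift_subset_TO:
  "pred_liftings TO TM ar lift \<Longrightarrow> length As = ar L \<Longrightarrow> \<forall>A\<in>set As. A \<subseteq> X \<Longrightarrow>
   lift L X As \<subseteq> TO X"
  unfolding pred_liftings_def by (elim conjE allE[of _ L] allE[of _ X] allE[of _ As]) blast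

lemma lift_natural:
  assumes "pred_liftings TO TM ar lift" and "\<forall>x\<in>X. f x \<in> Y"
    and "length Bs = ar L" and "\<forall>B\<in>set Bs. B \<subseteq> Y"
  shows "lift L X (map (\<lambda>B. {x\<in>X. f x \<in> B}) Bs) = {t\<in>TO X. TM f t \<in> lift L Y Bs}"
  using assms(1) unfolding pred_liftings_def
  by (elim conjE allE[of _ L] allE[of _ X] allE[of _ Y] allE[of _ f] allE[of _ Bs] impE)
    (use assms(2-4) in simp_all)

lemma lift_mono:
  assumes "monotone_liftings ar lift" and "length As = ar L" "length Bs = ar L"
    and "\<And>i. i < ar L \<Longrightarrow> As ! i \<subseteq> Bs ! i \<and> Bs ! i \<subseteq> X"
  shows "lift L X As \<subseteq> lift L X Bs"
  using assms unfolding monotone_liftings_def by blast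

lemma TM_in_lift:
  assumes pl: "pred_liftings TO TM ar lift" and ml: "monotone_liftings ar lift"
    and f: "\<forall>x\<in>X. f x \<in> Y" and len: "length As = ar L" "length Bs = ar L"
    and AB: "\<And>i. i < ar L \<Longrightarrow> As ! i \<subseteq> {x\<in>X. f x \<in> Bs ! i} \<and> Bs ! i \<subseteq> Y"
    and t: "t \<in> lift L X As"
  shows "TM f t \<in> lift L Y Bs"
proof -
  have "lift L X As \<subseteq> lift L X (map (\<lambda>B. {x\<in>X. f x \<in> B}) Bs)"
    using len AB by (intro lift_mono[OF ml]) auto
  also have "\<dots> = {t\<in>TO X. TM f t \<in> lift L Y Bs}"
    using len AB by (intro lift_natural[OF pl f]) (fastforce simp: in_set_conv_nth)+
  finally show ?thesis using t by blast
qed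

lemma lift_singletonsE:
  assumes "singleton_preserving ar lift" and "length xs = ar L" and "set xs \<subseteq> X"
  obtains t where "lift L X (map (\<lambda>x. {x}) xs) = {t}"
  using assms unfolding singleton_preserving_def by (metis card_1_singletonE)

section \<open>The expression coalgebra\<close>

inductive_cases eps_ModE: "eps_rel ar lift (Mod L \<phi>s) t"
inductive_cases eps_NuE: "eps_rel ar lift (Nu x \<phi>) t"

lemma eps_rel_unique: "eps_rel ar lift \<phi> t \<Longrightarrow> eps_rel ar lift \<phi> t' \<Longrightarrow> t = t'"
proof (induction arbitrary: t' rule: eps_rel.induct)
  case (eps_mod L \<phi>s t)
  then show ?case by (elim eps_ModE) simp
next
  case (eps_nu x \<phi> t)
  then show ?case by (elim eps_NuE) simp
qed

lemma eps_rel_exists: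
  assumes pl: "pred_liftings TO TM ar lift" and sp: "singleton_preserving ar lift"
  shows "\<phi> \<in> E0 ar \<Longrightarrow> \<exists>t. eps_rel ar lift \<phi> t \<and> t \<in> TO (Inl ` E0 ar)"
proof (induction "leading_nus \<phi>" arbitrary: \<phi> rule: less_induct)
  case less
  show ?case
  proof (cases \<phi>)
    case (Var z)
    then show ?thesis using less.prems by (auto simp: E0_def)
  next
    case (Nu x \<psi>)
    then have "subst x (Nu x \<psi>) \<psi> \<in> E0 ar" "leading_nus (subst x (Nu x \<psi>) \<psi>) < leading_nus \<phi>"
      using Nu_unfold_in_E0 leading_nus_Nu_unfold less.prems by auto
    then obtain t where "eps_rel ar lift (subst x (Nu x \<psi>) \<psi>) t" "t \<in> TO (Inl ` E0 ar)"
      using less.hyps by blast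
    then show ?thesis using Nu by (auto intro: eps_nu)
  next
    case (Mod L \<phi>s)
    have \<phi>s: "length \<phi>s = ar L" "\<forall>\<psi>\<in>set \<phi>s. \<psi> \<in> E0 ar"
      using Mod_in_E0D[of L \<phi>s ar] less.prems Mod by auto
    obtain t where t: "lift L (Inl ` E0 ar) (map (\<lambda>x. {x}) (map Inl \<phi>s)) = {t}"
      by (rule lift_singletonsE[OF sp, of "map Inl \<phi>s" L "Inl ` E0 ar"]) (use \<phi>s in auto)
    have "lift L (Inl ` E0 ar) (map (\<lambda>x. {x}) (map Inl \<phi>s)) \<subseteq> TO (Inl ` E0 ar)"
      by (rule lift_subset_TO[OF pl]) (use \<phi>s in auto)
    then show ?thesis using t Mod eps_mod[of lift L ar \<phi>s t] by (auto simp: comp_def)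
  qed
qed

lemma eps_coalg_rel:
  assumes "pred_liftings TO TM ar lift" and "singleton_preserving ar lift" and "\<phi> \<in> E0 ar"
  shows "eps_rel ar lift \<phi> (eps_coalg ar lift (Inl \<phi>)) \<and> eps_coalg ar lift (Inl \<phi>) \<in> TO (Inl ` E0 ar)"
proof -
  obtain t where t: "eps_rel ar lift \<phi> t" "t \<in> TO (Inl ` E0 ar)"
    using eps_rel_exists[OF assms] by blast
  then have "(THE t. eps_rel ar lift \<phi> t) = t"
    by (blast intro: the_equality eps_rel_unique)
  then show ?thesis using t by (simp add: eps_coalg_def)
qed

lemma is_coalg_eps:
  "pred_liftings TO TM ar lift \<Longrightarrow> singleton_preserving ar lift \<Longrightarrow>
   is_coalg TO (Inl ` E0 ar) (eps_coalg ar lift)"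
  using eps_coalg_rel unfolding is_coalg_def by blast

lemma eps_coalg_Mod:
  assumes "pred_liftings TO TM ar lift" and "singleton_preserving ar lift" and "Mod L \<phi>s \<in> E0 ar"
  shows "lift L (Inl ` E0 ar) (map (\<lambda>\<phi>. {Inl \<phi>}) \<phi>s) = {eps_coalg ar lift (Inl (Mod L \<phi>s))}"
  using eps_coalg_rel[OF assms] by (auto elim: eps_ModE)

lemma eps_coalg_Nu:
  assumes pl: "pred_liftings TO TM ar lift" and sp: "singleton_preserving ar lift"
    and \<phi>: "Nu x \<phi> \<in> E0 ar"
  shows "eps_coalg ar lift (Inl (Nu x \<phi>)) = eps_coalg ar lift (Inl (subst x (Nu x \<phi>) \<phi>))"
proof -
  have "eps_rel ar lift (subst x (Nu x \<phi>) \<phi>) (eps_coalg ar lift (Inl (Nu x \<phi>)))"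
    using eps_coalg_rel[OF pl sp \<phi>] by (auto elim: eps_NuE)
  then show ?thesis
    using eps_coalg_rel[OF pl sp Nu_unfold_in_E0[OF \<phi>]] by (metis eps_rel_unique)
qed

lemma sem_subset: "\<forall>z. \<kappa> z \<subseteq> X \<Longrightarrow> sem lift X \<xi> \<kappa> e \<subseteq> X"
  by (induction e arbitrary: \<kappa>) auto

lemma sem_mono:
  assumes ml: "monotone_liftings ar lift"
  shows "wf_expr ar e \<Longrightarrow> \<forall>z. \<kappa>1 z \<subseteq> \<kappa>2 z \<Longrightarrow> \<forall>z. \<kappa>2 z \<subseteq> X \<Longrightarrow>
    sem lift X \<xi> \<kappa>1 e \<subseteq> sem lift X \<xi> \<kappa>2 e"
proof (induction e arbitrary: \<kappa>1 \<kappa>2)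
  case (Nu z e)
  show ?case
  proof
    fix x assume "x \<in> sem lift X \<xi> \<kappa>1 (Nu z e)"
    then obtain W where W: "W \<subseteq> X" "W \<subseteq> sem lift X \<xi> (\<kappa>1(z := W)) e" "x \<in> W" by auto
    have "sem lift X \<xi> (\<kappa>1(z := W)) e \<subseteq> sem lift X \<xi> (\<kappa>2(z := W)) e"
      using Nu.prems W by (intro Nu.IH) auto
    then show "x \<in> sem lift X \<xi> \<kappa>2 (Nu z e)" using W by auto
  qed
next
  case (Mod L es)
  have "\<forall>i<ar L. map (sem lift X \<xi> \<kappa>1) es ! i \<subseteq> map (sem lift X \<xi> \<kappa>2) es ! i
       \<and> map (sem lift X \<xi> \<kappa>2) es ! i \<subseteq> X"
    using Mod sem_subset[of \<kappa>2 X lift \<xi>] by (auto intro!: Mod.IH)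
  then have "lift L X (map (sem lift X \<xi> \<kappa>1) es) \<subseteq> lift L X (map (sem lift X \<xi> \<kappa>2) es)"
    using Mod.prems by (intro lift_mono[OF ml]) auto
  then show ?case by auto
qed auto

lemma sem_cong_fv: "\<forall>z\<in>fv e. \<kappa>1 z = \<kappa>2 z \<Longrightarrow> sem lift X \<xi> \<kappa>1 e = sem lift X \<xi> \<kappa>2 e"
proof (induction e arbitrary: \<kappa>1 \<kappa>2)
  case (Nu z e)
  have "sem lift X \<xi> (\<kappa>1(z := W)) e = sem lift X \<xi> (\<kappa>2(z := W)) e" for W
    using Nu.prems by (intro Nu.IH) auto
  then show ?case by simp
next
  case (Mod L es)
  then have "map (sem lift X \<xi> \<kappa>1) es = map (sem lift X \<xi> \<kappa>2) es"
    by (intro map_cong refl Mod.IH) auto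
  then show ?case by (simp only: sem.simps)
qed auto

lemma sem_subst:
  "fv s = {} \<Longrightarrow> sem lift X \<xi> \<kappa> (subst x s e) = sem lift X \<xi> (\<kappa>(x := sem lift X \<xi> \<kappa> s)) e"
proof (induction e arbitrary: \<kappa>)
  case (Nu y e)
  show ?case
  proof (cases "y = x")
    case False
    have "sem lift X \<xi> (\<kappa>(y := W)) (subst x s e) = sem lift X \<xi> (\<kappa>(x := sem lift X \<xi> \<kappa> s, y := W)) e" for W
    proof -
      have "sem lift X \<xi> (\<kappa>(y := W)) (subst x s e)
          = sem lift X \<xi> (\<kappa>(y := W, x := sem lift X \<xi> (\<kappa>(y := W)) s)) e"
        using Nu by blast
      also have "sem lift X \<xi> (\<kappa>(y := W)) s = sem lift X \<xi> \<kappa> s"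
        using Nu.prems by (intro sem_cong_fv) auto
      finally show ?thesis using False by (metis fun_upd_twist)
    qed
    then show ?thesis using False by (simp del: fun_upd_apply)
  qed (simp del: fun_upd_apply)
next
  case (Mod L es)
  have "map (sem lift X \<xi> \<kappa> \<circ> subst x s) es = map (sem lift X \<xi> (\<kappa>(x := sem lift X \<xi> \<kappa> s))) es"
  proof (rule map_cong[OF refl])
    fix e assume "e \<in> set es"
    then show "(sem lift X \<xi> \<kappa> \<circ> subst x s) e = sem lift X \<xi> (\<kappa>(x := sem lift X \<xi> \<kappa> s)) e"
      using Mod by (simp add: fun_upd_def)
  qed
  then show ?case by (simp only: sem.simps subst.simps map_map)
qed auto

lemma sem_Nu_unfold:
  assumes ml: "monotone_liftings ar lift" and wf: "wf_expr ar e" and \<kappa>: "\<forall>z. \<kappa> z \<subseteq> X"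
  shows "sem lift X \<xi> \<kappa> (Nu z e) = sem lift X \<xi> (\<kappa>(z := sem lift X \<xi> \<kappa> (Nu z e))) e"
    (is "?G = _")
proof -
  \<comment> \<open>extends the map of the \<open>\<nu>\<close>-clause monotonically from the subsets of \<open>X\<close> to all sets\<close>
  define F where "F W = X \<inter> sem lift X \<xi> (\<kappa>(z := X \<inter> W)) e" for W
  have sub: "sem lift X \<xi> (\<kappa>(z := W)) e \<subseteq> X" if "W \<subseteq> X" for W
    using \<kappa> that by (intro sem_subset) simp
  have "F A \<subseteq> F B" if "A \<subseteq> B" for A B
  proof -
    have "sem lift X \<xi> (\<kappa>(z := X \<inter> A)) e \<subseteq> sem lift X \<xi> (\<kappa>(z := X \<inter> B)) e"
      using \<kappa> that by (intro sem_mono[OF ml wf]) auto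
    then show ?thesis unfolding F_def by blast
  qed
  then have "mono F" by (rule monoI)
  have "{Y. Y \<subseteq> X \<and> Y \<subseteq> sem lift X \<xi> (\<kappa>(z := Y)) e} = {W. W \<subseteq> F W}"
    unfolding F_def by (auto simp: Int_absorb1)
  then have "?G = gfp F" by (simp add: gfp_def)
  also have "\<dots> = F (gfp F)" using \<open>mono F\<close> by (rule gfp_unfold)
  finally have "?G = F ?G" by (simp only: \<open>?G = gfp F\<close>)
  moreover have "?G \<subseteq> X" by auto
  ultimately show ?thesis
    unfolding F_def using sub by (simp add: Int_absorb1)
qed

lemma semC_Nu_unfold:
  assumes ml: "monotone_liftings ar lift" and \<phi>: "Nu x \<phi> \<in> E0 ar"
  shows "semC lift X \<xi> (Nu x \<phi>) = semC lift X \<xi> (subst x (Nu x \<phi>) \<phi>)"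
proof -
  have wf: "wf_expr ar \<phi>" and fv: "fv (Nu x \<phi>) = {}" using \<phi> by (auto simp: E0_def)
  have "sem lift X \<xi> (\<lambda>_. {}) (Nu x \<phi>)
      = sem lift X \<xi> ((\<lambda>_. {})(x := sem lift X \<xi> (\<lambda>_. {}) (Nu x \<phi>))) \<phi>"
    by (rule sem_Nu_unfold[OF ml wf]) simp
  also have "\<dots> = sem lift X \<xi> (\<lambda>_. {}) (subst x (Nu x \<phi>) \<phi>)"
    by (rule sem_subst[OF fv, symmetric])
  finally show ?thesis unfolding semC_def .
qed

lemma coalg_hom_preimage_lift:
  assumes pl: "pred_liftings TO TM ar lift" and cX: "is_coalg TO X \<xi>"
    and h: "coalg_hom TM X \<xi> Y \<zeta> h" and "length Bs = ar L" and "\<forall>B\<in>set Bs. B \<subseteq> Y"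
  shows "{x\<in>X. \<xi> x \<in> lift L X (map (\<lambda>B. {x\<in>X. h x \<in> B}) Bs)}
       = {x\<in>X. h x \<in> Y \<and> \<zeta> (h x) \<in> lift L Y Bs}"
proof -
  have "\<forall>x\<in>X. h x \<in> Y" using h by (simp add: coalg_hom_def)
  then show ?thesis
    using assms lift_natural[OF pl] unfolding is_coalg_def coalg_hom_def by auto
qed

lemma sem_coalg_hom:
  assumes pl: "pred_liftings TO TM ar lift" and ml: "monotone_liftings ar lift"
    and cX: "is_coalg TO X \<xi>" and h: "coalg_hom TM X \<xi> Y \<zeta> h"
  shows "wf_expr ar e \<Longrightarrow> \<forall>z. \<kappa>Y z \<subseteq> Y \<Longrightarrow> \<forall>z. \<kappa>X z = {x\<in>X. h x \<in> \<kappa>Y z} \<Longrightarrow>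
    sem lift X \<xi> \<kappa>X e = {x\<in>X. h x \<in> sem lift Y \<zeta> \<kappa>Y e}"
proof (induction e arbitrary: \<kappa>X \<kappa>Y)
  case (Mod L es)
  have "sem lift X \<xi> \<kappa>X e = {x\<in>X. h x \<in> sem lift Y \<zeta> \<kappa>Y e}" if "e \<in> set es" for e
    using Mod.prems that by (intro Mod.IH) auto
  then have "map (sem lift X \<xi> \<kappa>X) es = map (\<lambda>B. {x\<in>X. h x \<in> B}) (map (sem lift Y \<zeta> \<kappa>Y) es)"
    by simp
  then have "sem lift X \<xi> \<kappa>X (Mod L es)
      = {x\<in>X. \<xi> x \<in> lift L X (map (\<lambda>B. {x\<in>X. h x \<in> B}) (map (sem lift Y \<zeta> \<kappa>Y) es))}"
    by (simp only: sem.simps)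
  also have "\<dots> = {x\<in>X. h x \<in> Y \<and> \<zeta> (h x) \<in> lift L Y (map (sem lift Y \<zeta> \<kappa>Y) es)}"
    using Mod.prems(1,2) sem_subset[of \<kappa>Y Y lift \<zeta>]
    by (intro coalg_hom_preimage_lift[OF pl cX h]) auto
  finally show ?case by auto
next
  case (Nu z e)
  have hX: "\<forall>x\<in>X. h x \<in> Y" using h by (simp add: coalg_hom_def)
  have IH: "sem lift X \<xi> (\<kappa>X(z := {x\<in>X. h x \<in> V})) e = {x\<in>X. h x \<in> sem lift Y \<zeta> (\<kappa>Y(z := V)) e}"
    if "V \<subseteq> Y" for V
    using Nu.prems that by (intro Nu.IH) auto
  show ?case
  proof (intro equalityI subsetI)
    fix x assume "x \<in> sem lift X \<xi> \<kappa>X (Nu z e)"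
    then obtain W where W: "W \<subseteq> X" "W \<subseteq> sem lift X \<xi> (\<kappa>X(z := W)) e" "x \<in> W" by auto
    have "h ` W \<subseteq> Y" using W hX by auto
    have "sem lift X \<xi> (\<kappa>X(z := W)) e \<subseteq> sem lift X \<xi> (\<kappa>X(z := {x\<in>X. h x \<in> h ` W})) e"
      using Nu.prems(1) W(1) by (intro sem_mono[OF ml]) (auto simp: Nu.prems(3))
    then have "W \<subseteq> sem lift X \<xi> (\<kappa>X(z := {x\<in>X. h x \<in> h ` W})) e"
      using W(2) by blast
    then have "h ` W \<subseteq> sem lift Y \<zeta> (\<kappa>Y(z := h ` W)) e"
      using IH[OF \<open>h ` W \<subseteq> Y\<close>] by blast
    then have "h ` W \<subseteq> sem lift Y \<zeta> \<kappa>Y (Nu z e)"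
      unfolding sem.simps using \<open>h ` W \<subseteq> Y\<close> by (intro Union_upper) simp
    then show "x \<in> {x\<in>X. h x \<in> sem lift Y \<zeta> \<kappa>Y (Nu z e)}"
      using W by blast
  next
    fix x assume "x \<in> {x\<in>X. h x \<in> sem lift Y \<zeta> \<kappa>Y (Nu z e)}"
    then obtain V where V: "V \<subseteq> Y" "V \<subseteq> sem lift Y \<zeta> (\<kappa>Y(z := V)) e" "h x \<in> V" "x \<in> X" by auto
    then have "{x\<in>X. h x \<in> V} \<subseteq> sem lift X \<xi> (\<kappa>X(z := {x\<in>X. h x \<in> V})) e"
      using IH[OF V(1)] by blast
    then have "{x\<in>X. h x \<in> V} \<subseteq> sem lift X \<xi> \<kappa>X (Nu z e)"
      unfolding sem.simps by (intro Union_upper) simp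
    then show "x \<in> sem lift X \<xi> \<kappa>X (Nu z e)" using V by blast
  qed
qed auto

definition saturated :: "'u set \<Rightarrow> ('u \<Rightarrow> 't) \<Rightarrow> 'u set \<Rightarrow> bool" where
  "saturated X \<xi> S \<longleftrightarrow> S \<subseteq> X \<and> (\<forall>a\<in>X. \<forall>b\<in>X. \<xi> a = \<xi> b \<longrightarrow> a \<in> S \<longrightarrow> b \<in> S)"

lemma sem_saturated:
  assumes ml: "monotone_liftings ar lift"
  shows "wf_expr ar e \<Longrightarrow> \<forall>z. saturated X \<xi> (\<kappa> z) \<Longrightarrow> saturated X \<xi> (sem lift X \<xi> \<kappa> e)"
proof (induction e arbitrary: \<kappa>)
  case (Mod L es)
  then show ?case unfolding saturated_def by auto
next
  case (Nu z e)
  have \<kappa>X: "\<forall>z. \<kappa> z \<subseteq> X" using Nu.prems by (auto simp: saturated_def)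
  define cl where "cl W = {b\<in>X. \<exists>a\<in>W. \<xi> a = \<xi> b}" for W
  have cl: "saturated X \<xi> (cl W)" for W unfolding saturated_def cl_def by auto
  have post: "cl W \<subseteq> sem lift X \<xi> (\<kappa>(z := cl W)) e"
    if W: "W \<subseteq> X" "W \<subseteq> sem lift X \<xi> (\<kappa>(z := W)) e" for W
  proof -
    have "W \<subseteq> cl W" using W cl_def by auto
    then have "sem lift X \<xi> (\<kappa>(z := W)) e \<subseteq> sem lift X \<xi> (\<kappa>(z := cl W)) e"
      using Nu.prems \<kappa>X by (intro sem_mono[OF ml]) (auto simp: cl_def)
    moreover have sat: "saturated X \<xi> (sem lift X \<xi> (\<kappa>(z := cl W)) e)"
      using Nu.prems cl by (intro Nu.IH) auto
    ultimately have "W \<subseteq> sem lift X \<xi> (\<kappa>(z := cl W)) e" using W by auto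
    then show ?thesis using sat unfolding saturated_def cl_def by blast
  qed
  show ?case unfolding saturated_def
  proof (intro conjI ballI impI)
    show "sem lift X \<xi> \<kappa> (Nu z e) \<subseteq> X" by auto
  next
    fix a b assume ab: "a \<in> X" "b \<in> X" "\<xi> a = \<xi> b" "a \<in> sem lift X \<xi> \<kappa> (Nu z e)"
    then obtain W where W: "W \<subseteq> X" "W \<subseteq> sem lift X \<xi> (\<kappa>(z := W)) e" "a \<in> W" by auto
    have "b \<in> cl W" "cl W \<subseteq> X" using ab W cl_def by auto
    then show "b \<in> sem lift X \<xi> \<kappa> (Nu z e)" using post[OF W(1,2)] by auto
  qed
qed simp

text \<open>The post-fixed point witnessing \<open>a \<in> \<nu>z. e\<close> is the whole class of states with
  the same transition as \<open>a\<close>; saturation lets one member stand for all of them.\<close>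
lemma mem_sem_NuI:
  assumes ml: "monotone_liftings ar lift" and wf: "wf_expr ar e"
    and \<kappa>: "\<forall>z. saturated X \<xi> (\<kappa> z)" and ab: "a \<in> X" "b \<in> X" "\<xi> b = \<xi> a"
    and b: "b \<in> sem lift X \<xi> (\<kappa>(z := {c\<in>X. \<xi> c = \<xi> a})) e"
  shows "a \<in> sem lift X \<xi> \<kappa> (Nu z e)"
proof -
  define Y where "Y = {c\<in>X. \<xi> c = \<xi> a}"
  have "saturated X \<xi> Y" by (auto simp: saturated_def Y_def)
  then have "\<forall>z'. saturated X \<xi> ((\<kappa>(z := Y)) z')" using \<kappa> by simp
  then have sat: "saturated X \<xi> (sem lift X \<xi> (\<kappa>(z := Y)) e)" by (rule sem_saturated[OF ml wf])
  have "Y \<subseteq> sem lift X \<xi> (\<kappa>(z := Y)) e"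
  proof
    fix c assume "c \<in> Y"
    then have "c \<in> X" "\<xi> b = \<xi> c" using ab by (simp_all add: Y_def)
    then show "c \<in> sem lift X \<xi> (\<kappa>(z := Y)) e"
      using sat ab(2) b unfolding saturated_def Y_def by blast
  qed
  then have "Y \<subseteq> sem lift X \<xi> \<kappa> (Nu z e)"
    unfolding sem.simps by (intro Union_upper) (simp add: Y_def)
  moreover have "a \<in> Y" using ab(1) by (simp add: Y_def)
  ultimately show ?thesis by (rule subsetD)
qed

section \<open>The truth lemma\<close>

lemma sem_eps_ssubst:
  fixes lift :: "'l \<Rightarrow> (('l,'v) expr + 'x) set \<Rightarrow> (('l,'v) expr + 'x) set list \<Rightarrow> 't set"
  assumes pl: "pred_liftings TO TM ar lift" and sp: "singleton_preserving ar lift"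
    and ml: "monotone_liftings ar lift"
  shows "wf_expr ar e \<Longrightarrow> \<forall>z\<in>fv e. \<sigma> z \<in> E0 ar \<and> Inl (\<sigma> z) \<in> \<kappa> z \<Longrightarrow>
    \<forall>z. saturated (Inl ` E0 ar) (eps_coalg ar lift) (\<kappa> z) \<Longrightarrow> ssubst \<sigma> e \<in> E0 ar \<Longrightarrow>
    Inl (ssubst \<sigma> e) \<in> sem lift (Inl ` E0 ar) (eps_coalg ar lift) \<kappa> e"
proof (induction e arbitrary: \<sigma> \<kappa>)
  case (Mod L es)
  let ?E = "Inl ` E0 ar :: (('l,'v) expr + 'x) set" and ?\<epsilon> = "eps_coalg ar lift"
  have len: "length es = ar L" using Mod.prems(1) by simp
  have IH: "Inl (ssubst \<sigma> e) \<in> sem lift ?E ?\<epsilon> \<kappa> e" if e: "e \<in> set es" for e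
  proof (rule Mod.IH[OF e])
    show "wf_expr ar e" using Mod.prems(1) e by simp
    show "\<forall>z\<in>fv e. \<sigma> z \<in> E0 ar \<and> Inl (\<sigma> z) \<in> \<kappa> z" using Mod.prems(2) e by auto
    show "\<forall>z. saturated ?E ?\<epsilon> (\<kappa> z)" by (fact Mod.prems(3))
    show "ssubst \<sigma> e \<in> E0 ar" using Mod_in_E0D[of L "map (ssubst \<sigma>) es" ar] Mod.prems(4) e by simp
  qed
  have "sem lift ?E ?\<epsilon> \<kappa> e \<subseteq> ?E" for e
    using Mod.prems(3) by (intro sem_subset) (simp add: saturated_def)
  with IH have "lift L ?E (map (\<lambda>\<phi>. {Inl \<phi>}) (map (ssubst \<sigma>) es)) \<subseteq> lift L ?E (map (sem lift ?E ?\<epsilon> \<kappa>) es)"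
    using len by (intro lift_mono[OF ml]) simp_all
  then show ?case
    using Mod.prems(4) eps_coalg_Mod[OF pl sp, of L "map (ssubst \<sigma>) es"] by simp
next
  case (Nu z \<psi>)
  let ?E = "Inl ` E0 ar :: (('l,'v) expr + 'x) set" and ?\<epsilon> = "eps_coalg ar lift"
  let ?N = "ssubst \<sigma> (Nu z \<psi>)" and ?\<sigma>' = "\<sigma>(z := ssubst \<sigma> (Nu z \<psi>))"
  have N: "?N \<in> E0 ar" by (fact Nu.prems(4))
  have unfold: "subst z ?N (ssubst (\<sigma>(z := Var z)) \<psi>) = ssubst ?\<sigma>' \<psi>"
    using Nu.prems(2) by (intro subst_ssubst_upd) (auto simp: E0_def)
  then have U: "ssubst ?\<sigma>' \<psi> \<in> E0 ar"
    using Nu_unfold_in_E0[of z "ssubst (\<sigma>(z := Var z)) \<psi>"] N by simp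
  have \<epsilon>U: "?\<epsilon> (Inl (ssubst ?\<sigma>' \<psi>)) = ?\<epsilon> (Inl ?N)"
    using eps_coalg_Nu[OF pl sp, of z "ssubst (\<sigma>(z := Var z)) \<psi>"] N unfold by simp
  define Y where "Y = {c\<in>?E. ?\<epsilon> c = ?\<epsilon> (Inl ?N)}"
  have "Inl (ssubst ?\<sigma>' \<psi>) \<in> sem lift ?E ?\<epsilon> (\<kappa>(z := Y)) \<psi>"
  proof (rule Nu.IH)
    show "wf_expr ar \<psi>" using Nu.prems(1) by simp
    have "Inl ?N \<in> Y" using N by (simp add: Y_def)
    then show "\<forall>y\<in>fv \<psi>. ?\<sigma>' y \<in> E0 ar \<and> Inl (?\<sigma>' y) \<in> (\<kappa>(z := Y)) y"
      using Nu.prems(2) N by simp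
    have "saturated ?E ?\<epsilon> Y" unfolding saturated_def Y_def by auto
    then show "\<forall>y. saturated ?E ?\<epsilon> ((\<kappa>(z := Y)) y)"
      using Nu.prems(3) by simp
  qed (fact U)
  then show ?case
    unfolding Y_def using Nu.prems(1) N U
    by (intro mem_sem_NuI[OF ml _ Nu.prems(3) _ _ \<epsilon>U]) simp_all
qed simp

lemma sem_eps_self:
  assumes "pred_liftings TO TM ar lift" and "singleton_preserving ar lift"
    and "monotone_liftings ar lift" and "\<phi> \<in> E0 ar"
  shows "Inl \<phi> \<in> semC lift (Inl ` E0 ar) (eps_coalg ar lift) \<phi>"
  using sem_eps_ssubst[OF assms(1-3), of \<phi> Var "\<lambda>_. {}"] assms(4)
  by (simp add: semC_def E0_def saturated_def ssubst_Var)

lemma beh_equiv_imp_sem: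
  assumes pl: "pred_liftings TO TM ar lift" and sp: "singleton_preserving ar lift"
    and ml: "monotone_liftings ar lift" and \<phi>: "\<phi> \<in> E0 ar"
    and cX: "is_coalg TO X \<xi>" and x: "x \<in> X"
    and "beh_equiv TO TM X \<xi> x (Inl ` E0 ar) (eps_coalg ar lift) (Inl \<phi>)"
  shows "x \<in> semC lift X \<xi> \<phi>"
proof -
  obtain Z \<theta> h g where h: "coalg_hom TM X \<xi> Z \<theta> h"
    and g: "coalg_hom TM (Inl ` E0 ar) (eps_coalg ar lift) Z \<theta> g" and hg: "h x = g (Inl \<phi>)"
    using assms(7) unfolding beh_equiv_def by blast
  have wf: "wf_expr ar \<phi>" using \<phi> by (simp add: E0_def)
  have "sem lift (Inl ` E0 ar) (eps_coalg ar lift) (\<lambda>_. {}) \<phi>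
      = {u\<in>Inl ` E0 ar. g u \<in> sem lift Z \<theta> (\<lambda>_. {}) \<phi>}"
    by (rule sem_coalg_hom[OF pl ml is_coalg_eps[OF pl sp] g wf]) simp_all
  then have "g (Inl \<phi>) \<in> sem lift Z \<theta> (\<lambda>_. {}) \<phi>"
    using sem_eps_self[OF pl sp ml \<phi>] unfolding semC_def by blast
  moreover have "sem lift X \<xi> (\<lambda>_. {}) \<phi> = {u\<in>X. h u \<in> sem lift Z \<theta> (\<lambda>_. {}) \<phi>}"
    by (rule sem_coalg_hom[OF pl ml cX h wf]) simp_all
  ultimately show ?thesis using x hg unfolding semC_def by simp
qed

section \<open>Gluing states to the expressions they satisfy\<close>

lemma TM_eq_if_sem_glued:
  fixes lift :: "'l \<Rightarrow> (('l,'v) expr + 'x) set \<Rightarrow> (('l,'v) expr + 'x) set list \<Rightarrow> 't set"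
  assumes pl: "pred_liftings TO TM ar lift" and ml: "monotone_liftings ar lift"
    and sp: "singleton_preserving ar lift"
    and glue: "\<And>y \<psi>. y \<in> X \<Longrightarrow> \<psi> \<in> E0 ar \<Longrightarrow> y \<in> semC lift X \<xi> \<psi> \<Longrightarrow> h y = g (Inl \<psi>)"
  shows "\<psi> \<in> E0 ar \<Longrightarrow> y \<in> X \<Longrightarrow> y \<in> semC lift X \<xi> \<psi> \<Longrightarrow>
    TM h (\<xi> y) = TM g (eps_coalg ar lift (Inl \<psi>))"
proof (induction "leading_nus \<psi>" arbitrary: \<psi> rule: less_induct)
  case less
  show ?case
  proof (cases \<psi>)
    case (Var z)
    then show ?thesis using less.prems by (simp add: E0_def)
  next
    case (Nu z \<chi>)
    let ?U = "subst z (Nu z \<chi>) \<chi>"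
    have U: "?U \<in> E0 ar" "leading_nus ?U < leading_nus \<psi>"
      using Nu less.prems Nu_unfold_in_E0 leading_nus_Nu_unfold by auto
    have "semC lift X \<xi> \<psi> = semC lift X \<xi> ?U"
      using semC_Nu_unfold[OF ml] less.prems Nu by simp
    moreover have "eps_coalg ar lift (Inl \<psi>) = eps_coalg ar lift (Inl ?U)"
      using eps_coalg_Nu[OF pl sp] less.prems Nu by simp
    ultimately show ?thesis using less.hyps[OF U(2) U(1)] less.prems(2,3) by simp
  next
    case (Mod L \<phi>s)
    have \<phi>s: "length \<phi>s = ar L" "\<forall>\<phi>\<in>set \<phi>s. \<phi> \<in> E0 ar"
      using Mod_in_E0D[of L \<phi>s ar] less.prems(1) Mod by auto
    let ?Bs = "map (\<lambda>\<phi>. {g (Inl \<phi>)}) \<phi>s"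
    obtain t where t: "lift L UNIV ?Bs = {t}"
      by (rule lift_singletonsE[OF sp, of "map (\<lambda>\<phi>. g (Inl \<phi>)) \<phi>s" L UNIV])
        (simp_all add: \<phi>s comp_def)
    have "sem lift X \<xi> (\<lambda>_. {}) \<phi> \<subseteq> {x\<in>X. h x \<in> {g (Inl \<phi>)}}" if "\<phi> \<in> set \<phi>s" for \<phi>
    proof
      fix x assume x: "x \<in> sem lift X \<xi> (\<lambda>_. {}) \<phi>"
      then have "x \<in> X" using sem_subset[of "\<lambda>_. {}" X lift \<xi> \<phi>] by blast
      then show "x \<in> {x\<in>X. h x \<in> {g (Inl \<phi>)}}"
        using glue[of x \<phi>] x \<phi>s that unfolding semC_def by simp
    qed
    moreover have "\<xi> y \<in> lift L X (map (sem lift X \<xi> (\<lambda>_. {})) \<phi>s)"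
      using less.prems(3) Mod unfolding semC_def by simp
    ultimately have "TM h (\<xi> y) \<in> lift L UNIV ?Bs"
      using \<phi>s(1) by (intro TM_in_lift[OF pl ml]) simp_all
    moreover have "TM g (eps_coalg ar lift (Inl \<psi>)) \<in> lift L UNIV ?Bs"
    proof (rule TM_in_lift[OF pl ml, where As = "map (\<lambda>\<phi>. {Inl \<phi>}) \<phi>s" and X = "Inl ` E0 ar"])
      show "eps_coalg ar lift (Inl \<psi>) \<in> lift L (Inl ` E0 ar) (map (\<lambda>\<phi>. {Inl \<phi>}) \<phi>s)"
        using eps_coalg_Mod[OF pl sp] less.prems(1) Mod by simp
    qed (use \<phi>s in simp_all)
    ultimately show ?thesis using t by simp
  qed
qed

lemma beh_equivI_image:
  assumes sf: "set_functor TO TM" and cX: "is_coalg TO X \<xi>" and cY: "is_coalg TO Y \<zeta>"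
    and h: "\<forall>x\<in>X. \<theta> (h x) = TM h (\<xi> x)" and g: "\<forall>y\<in>Y. \<theta> (g y) = TM g (\<zeta> y)"
    and "x \<in> X" "y \<in> Y" "h x = g y"
  shows "beh_equiv TO TM X \<xi> x Y \<zeta> y"
proof -
  let ?Z = "h ` X \<union> g ` Y"
  have "is_coalg TO ?Z \<theta>"
    using cX cY h g set_functor_mapsto[OF sf, of X h ?Z] set_functor_mapsto[OF sf, of Y g ?Z]
    unfolding is_coalg_def by auto
  moreover have "coalg_hom TM X \<xi> ?Z \<theta> h" "coalg_hom TM Y \<zeta> ?Z \<theta> g"
    using h g unfolding coalg_hom_def by auto
  ultimately show ?thesis using assms(6-8) unfolding beh_equiv_def by blast
qed

lemma equiv_representativesE:
  assumes "equiv UNIV r"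
  obtains q where "\<And>a. (a, q a) \<in> r" and "\<And>a b. (a, b) \<in> r \<Longrightarrow> q a = q b"
proof
  show "(a, SOME c. c \<in> r `` {a}) \<in> r" for a
    using assms someI[of "\<lambda>c. c \<in> r `` {a}" a] by (auto simp: equiv_def refl_on_def)
  show "(SOME c. c \<in> r `` {a}) = (SOME c. c \<in> r `` {b})" if "(a, b) \<in> r" for a b
    using assms that by (simp add: equiv_class_eq)
qed

lemma eq_on_rtrancl_symcl:
  assumes "\<And>a b. (a, b) \<in> R \<Longrightarrow> f a = f b" and "(a, b) \<in> (R \<union> R\<inverse>)\<^sup>*"
  shows "f a = f b"
  using assms(2) by (induction rule: rtrancl_induct) (use assms(1) in force)+

text \<open>A state satisfying \<open>\<phi>\<close> is glued to \<open>\<phi>\<close> inside the disjoint union of the two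
  coalgebras; this union is realised in the universe itself, with states \<open>u\<close> tagged
  injectively as \<open>left u\<close> and expressions \<open>\<psi>\<close> as \<open>Mod _ [\<psi>]\<close>. The transition map on the
  quotient is well defined because glued states have equal transitions.\<close>
lemma sem_imp_beh_equiv:
  fixes TO :: "(('l, 'v) expr + 'x) set \<Rightarrow> 't set"
  assumes sf: "set_functor TO TM" and pl: "pred_liftings TO TM ar lift"
    and ml: "monotone_liftings ar lift" and sp: "singleton_preserving ar lift"
    and cX: "is_coalg TO X \<xi>" and x: "x \<in> X" and \<phi>: "\<phi> \<in> E0 ar" and x\<phi>: "x \<in> semC lift X \<xi> \<phi>"
  shows "beh_equiv TO TM X \<xi> x (Inl ` E0 ar) (eps_coalg ar lift) (Inl \<phi>)"
proof -
  define left :: "('l, 'v) expr + 'x \<Rightarrow> ('l, 'v) expr + 'x"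
    where "left u = (case u of Inl e \<Rightarrow> Inl (Nu undefined e) | Inr b \<Rightarrow> Inr b)" for u
  define right :: "('l, 'v) expr + 'x \<Rightarrow> ('l, 'v) expr + 'x"
    where "right u = Inl (Mod undefined [projl u])" for u
  define R where "R = {(left y, right (Inl \<psi>)) | y \<psi>. y \<in> X \<and> \<psi> \<in> E0 ar \<and> y \<in> semC lift X \<xi> \<psi>}"
  define glued where "glued = (R \<union> R\<inverse>)\<^sup>*"
  have equiv: "equiv UNIV glued"
    unfolding glued_def equiv_def by (simp add: refl_rtrancl sym_rtrancl sym_Un_converse trans_rtrancl)
  obtain q where q_mem: "\<And>d. (d, q d) \<in> glued" and q_eq: "\<And>d d'. (d, d') \<in> glued \<Longrightarrow> q d = q d'"
    using equiv_representativesE[OF equiv] by blast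
  define h where "h = q \<circ> left"
  define g where "g = q \<circ> right"
  have glue: "h y = g (Inl \<psi>)" if "y \<in> X" "\<psi> \<in> E0 ar" "y \<in> semC lift X \<xi> \<psi>" for y \<psi>
  proof -
    have "(left y, right (Inl \<psi>)) \<in> glued" using that unfolding glued_def R_def by blast
    then show ?thesis unfolding h_def g_def comp_def by (rule q_eq)
  qed
  define \<theta> where "\<theta> d = (case d of
      Inl (Mod _ \<psi>s) \<Rightarrow> TM g (eps_coalg ar lift (Inl (hd \<psi>s)))
    | Inl (Nu _ e) \<Rightarrow> TM h (\<xi> (Inl e))
    | Inr b \<Rightarrow> TM h (\<xi> (Inr b))
    | _ \<Rightarrow> undefined)" for d
  have \<theta>_left: "\<theta> (left y) = TM h (\<xi> y)" for y
    by (cases y) (simp_all add: \<theta>_def left_def)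
  have \<theta>_right: "\<theta> (right (Inl \<psi>)) = TM g (eps_coalg ar lift (Inl \<psi>))" for \<psi>
    by (simp add: \<theta>_def right_def)
  have glued_step: "TM h (\<xi> y) = TM g (eps_coalg ar lift (Inl \<psi>))"
    if "y \<in> X" "\<psi> \<in> E0 ar" "y \<in> semC lift X \<xi> \<psi>" for y \<psi>
  proof (rule TM_eq_if_sem_glued[OF pl ml sp, where X = X and \<xi> = \<xi> and h = h and g = g])
    show "h y' = g (Inl \<psi>')" if "y' \<in> X" "\<psi>' \<in> E0 ar" "y' \<in> semC lift X \<xi> \<psi>'" for y' \<psi>'
      using that by (rule glue)
  qed (fact that)+
  have "\<theta> d = \<theta> d'" if "(d, d') \<in> glued" for d d'
    using that unfolding glued_def
  proof (rule eq_on_rtrancl_symcl[rotated])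
    show "\<theta> a = \<theta> b" if "(a, b) \<in> R" for a b
      using that glued_step \<theta>_left \<theta>_right unfolding R_def by auto
  qed
  then have \<theta>_q: "\<theta> (q d) = \<theta> d" for d
    using q_mem by (metis equiv_def symD equiv)
  show ?thesis
  proof (rule beh_equivI_image[OF sf cX is_coalg_eps[OF pl sp], where h = h and g = g and \<theta> = \<theta>])
    show "\<forall>y\<in>X. \<theta> (h y) = TM h (\<xi> y)"
      using \<theta>_q \<theta>_left by (simp add: h_def)
    show "\<forall>u\<in>Inl ` E0 ar. \<theta> (g u) = TM g (eps_coalg ar lift u)"
      using \<theta>_q \<theta>_right by (auto simp: g_def)
  qed (use glue x \<phi> x\<phi> in auto)
qed

theorem mainTheorem16:
  fixes TO :: "(('l, 'v) expr + 'x) set \<Rightarrow> 't set"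
    and TM :: "((('l, 'v) expr + 'x) \<Rightarrow> (('l, 'v) expr + 'x)) \<Rightarrow> 't \<Rightarrow> 't"
    and ar :: "'l \<Rightarrow> nat"
    and lift :: "'l \<Rightarrow> (('l, 'v) expr + 'x) set \<Rightarrow> (('l, 'v) expr + 'x) set list \<Rightarrow> 't set"
  assumes "set_functor TO TM"
    and "pred_liftings TO TM ar lift"
    and "monotone_liftings ar lift"
    and "singleton_preserving ar lift"
    and "strongly_expressive TO ar lift"
  shows "(\<forall>\<phi>\<in>E0 ar. \<forall>X \<xi>. is_coalg TO X \<xi> \<longrightarrow>
            (\<forall>x\<in>X. x \<in> semC lift X \<xi> \<phi> \<longleftrightarrow>
               beh_equiv TO TM X \<xi> x (Inl ` E0 ar) (eps_coalg ar lift) (Inl \<phi>)))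
       \<and> (\<forall>\<phi>\<in>E0 ar. Inl \<phi> \<in> semC lift (Inl ` E0 ar) (eps_coalg ar lift) \<phi>)"
  using sem_imp_beh_equiv[OF assms(1-4)] beh_equiv_imp_sem[OF assms(2,4,3)]
    sem_eps_self[OF assms(2,4,3)]
  by blast

end
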